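(* For the system $$u_{1,0}-u_{0,1}-\frac{\alpha-\beta}{1+u_{0,0}v_{1,1}}\,u_{0,0}=0,\qquad v_{1,0}-v_{0,1}+\frac{\alpha-\beta}{1+u_{0,0}v_{1,1}}\,v_{1,1}=0,$$ the pair $$(\rho,\sigma)=\big(\ln|1+u_{-1,0}v_{1,0}|,\ \ \ln|1+u_{-1,0}v_{0,1}|\big)$$ is a conservation law, i.e. $(\mathcal T-1)\rho=(\mathcal S-1)\sigma$ on solutions.
   Context: Unknowns $u,v$ on $\mathbb Z^2$, $u_{i,j}=u(n+i,m+j)$, similarly $v$; $\alpha\neq\beta$ constants. Shifts $\mathcal S:n\mapsto n+1$, $\mathcal T:m\mapsto m+1$, acting by $\mathcal S^k\mathcal T^\ell(f_{i,j})=f_{i+k,j+\ell}$. A conservation law is a pair $(\rho,\sigma)$ of functions of finitely many shifts of $(u,v)$ with $(\mathcal T-1)\rho=(\mathcal S-1)\sigma$ holding for all solutions of the system (on which all arguments of logarithms and denominators are nonzero). *)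

theory Defs
  imports Complex_Main
begin

type_synonym field2 = "int \<Rightarrow> int \<Rightarrow> real"

definition solves_system :: "real \<Rightarrow> real \<Rightarrow> field2 \<Rightarrow> field2 \<Rightarrow> bool" where
  "solves_system \<alpha> \<beta> u v \<longleftrightarrow> (\<forall>n m.
     u (n+1) m - u n (m+1) - (\<alpha> - \<beta>) / (1 + u n m * v (n+1) (m+1)) * u n m = 0 \<and>
     v (n+1) m - v n (m+1) + (\<alpha> - \<beta>) / (1 + u n m * v (n+1) (m+1)) * v (n+1) (m+1) = 0)"

definition rho :: "field2 \<Rightarrow> field2 \<Rightarrow> int \<Rightarrow> int \<Rightarrow> real" where
  "rho u v n m = ln \<bar>1 + u (n-1) m * v (n+1) m\<bar>"

definition sigma :: "field2 \<Rightarrow> field2 \<Rightarrow> int \<Rightarrow> int \<Rightarrow> real" where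
  "sigma u v n m = ln \<bar>1 + u (n-1) m * v n (m+1)\<bar>"

end

theory Submission
  imports Defs
begin

text \<open>The system is linear in \<open>u\<^sub>0\<^sub>,\<^sub>1\<close> and \<open>v\<^sub>1\<^sub>,\<^sub>0\<close>, so on a solution these can be
  eliminated. Then the argument \<open>R\<close> of \<open>\<rho>\<close> and the argument \<open>\<Sigma>\<close> of \<open>\<sigma>\<close> satisfy the
  polynomial identity \<open>(\<T>R) \<cdot> \<Sigma> = (\<S>\<Sigma>) \<cdot> R\<close>, and \<open>ln |\<cdot>|\<close> turns this product identity into
  the conservation law.\<close>

lemma ln_abs_diff_eq_of_cross_mult_eq:
  fixes a b c d :: real
  assumes "a \<noteq> 0" "b \<noteq> 0" "c \<noteq> 0" "d \<noteq> 0" and "a * d = c * b"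
  shows "ln \<bar>a\<bar> - ln \<bar>b\<bar> = ln \<bar>c\<bar> - ln \<bar>d\<bar>"
proof -
  have "ln \<bar>a\<bar> + ln \<bar>d\<bar> = ln \<bar>a * d\<bar>" using assms(1-4) by (simp add: ln_mult abs_mult)
  also have "\<dots> = ln \<bar>c * b\<bar>" by (simp only: assms(5))
  also have "\<dots> = ln \<bar>c\<bar> + ln \<bar>b\<bar>" using assms(1-4) by (simp add: ln_mult abs_mult)
  finally show ?thesis by linarith
qed

lemma solves_system_u_up:
  assumes "solves_system \<alpha> \<beta> u v"
  shows "u n (m+1) = u (n+1) m - (\<alpha> - \<beta>) * u n m / (1 + u n m * v (n+1) (m+1))"
proof -
  have "u (n+1) m - u n (m+1) - (\<alpha> - \<beta>) / (1 + u n m * v (n+1) (m+1)) * u n m = 0"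
    using assms unfolding solves_system_def by blast
  then show ?thesis by (simp add: field_simps)
qed

lemma solves_system_v_right:
  assumes "solves_system \<alpha> \<beta> u v"
  shows "v (n+1) m = v n (m+1) - (\<alpha> - \<beta>) * v (n+1) (m+1) / (1 + u n m * v (n+1) (m+1))"
proof -
  have "v (n+1) m - v n (m+1) + (\<alpha> - \<beta>) / (1 + u n m * v (n+1) (m+1)) * v (n+1) (m+1) = 0"
    using assms unfolding solves_system_def by blast
  then show ?thesis by (simp add: field_simps)
qed

lemma solves_system_cross_mult_identity:
  assumes sol: "solves_system \<alpha> \<beta> u v"
    and D: "1 + u n m * v (n+1) (m+1) \<noteq> 0"
    and D': "1 + u (n-1) m * v n (m+1) \<noteq> 0"
  shows "(1 + u (n-1) (m+1) * v (n+1) (m+1)) * (1 + u (n-1) m * v n (m+1))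
       = (1 + u n m * v (n+1) (m+1)) * (1 + u (n-1) m * v (n+1) m)"
proof -
  have u_up: "u (n-1) (m+1) = u n m - (\<alpha> - \<beta>) * u (n-1) m / (1 + u (n-1) m * v n (m+1))"
    using solves_system_u_up[OF sol, of "n-1" m] by simp
  show ?thesis
    unfolding u_up solves_system_v_right[OF sol, of n m] using D D' by (simp add: field_simps)
qed

theorem mainTheorem7:
  fixes \<alpha> \<beta> :: real and u v :: "int \<Rightarrow> int \<Rightarrow> real"
  assumes "\<alpha> \<noteq> \<beta>"
    and "solves_system \<alpha> \<beta> u v"
    and "\<forall>n m. 1 + u n m * v (n+1) (m+1) \<noteq> 0"
    and "\<forall>n m. 1 + u (n-1) m * v (n+1) m \<noteq> 0"
    and "\<forall>n m. 1 + u (n-1) m * v n (m+1) \<noteq> 0"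
  shows "\<forall>n m. rho u v n (m+1) - rho u v n m = sigma u v (n+1) m - sigma u v n m"
proof (intro allI)
  fix n m :: int
  have rho_up: "1 + u (n-1) (m+1) * v (n+1) (m+1) \<noteq> 0"
    using assms(4)[rule_format, of n "m+1"] by simp
  have "ln \<bar>1 + u (n-1) (m+1) * v (n+1) (m+1)\<bar> - ln \<bar>1 + u (n-1) m * v (n+1) m\<bar>
      = ln \<bar>1 + u n m * v (n+1) (m+1)\<bar> - ln \<bar>1 + u (n-1) m * v n (m+1)\<bar>"
    using rho_up assms(3-5)
    by (intro ln_abs_diff_eq_of_cross_mult_eq solves_system_cross_mult_identity[OF assms(2)]) auto
  then show "rho u v n (m+1) - rho u v n m = sigma u v (n+1) m - sigma u v n m"
    by (simp add: rho_def sigma_def)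
qed

end
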